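(* Let $O$ be a random vector containing $Z$, let $S_{ab}$ be a known function of $O$, and let $h\mapsto m_a(O,h)$ be a map that is linear a.s. on $L_2(P_{Z})$ with $h\mapsto E[m_a(O,h)]$ continuous. Assume there is a linear map $h\mapsto m_a^\ddagger(o,h)$ on $L_2(P_Z)$ such that $h\mapsto E[m_a^\ddagger(O,h)]$ is continuous with Riesz representer $\mathcal R_a^\ddagger(Z)$, $|m_a(o,h)|\le m_a^\ddagger(o,|h|)$ for all $o$ and all $h\in L_2(P_Z)$, and $E[(\mathcal R_a^\ddagger)^2]\le K$. Assume $a\in\mathcal G_n(\phi,s_a,2,\varphi)$ with associated parameter $\theta_a^*$, where $s_a\log(p)/\sqrt n\to0$, and let $r(Z)=a(Z)-\varphi(\langle\theta^*_a,\phi(Z)\rangle)$. Let $h$ be such that $E[(S_{ab}h)^2]\le K$. Then $\sqrt n\,E\big[|S_{ab}h\,r+m_a(O,r)|\big]\to0$.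
   Context: Asymptotics are in $n$ and all quantities may depend on $n$; $K$ is a fixed positive constant. $\phi(Z)=(\phi_1(Z),\dots,\phi_p(Z))^\top$, $p=p(n)$. $\mathcal G_n(\phi,s,j,\varphi)$ is the set of functions $c(Z)$ for which there exist $\theta^*\in\mathbb R^p$ with $\|\theta^*\|_0\le s$ and $r(Z)$ with $c(Z)=\varphi(\langle\theta^*,\phi(Z)\rangle)+r(Z)$ and $E[r(Z)^2]\le K(s\log(p)/n)^j$; $\theta^*$ is the associated parameter. *)

theory Defs
  imports "HOL-Probability.Probability"
begin

text \<open>The random vector O is the sample point of the probability space M;
  Z = Zf O with values in the measurable space N.  L2(P_Z) is represented by
  measurable h on N with E[h(Z)^2] finite.\<close>

definition L2Z :: "'o measure \<Rightarrow> ('o \<Rightarrow> 'z) \<Rightarrow> 'z measure \<Rightarrow> ('z \<Rightarrow> real) set" where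
  "L2Z M Zf N = {h. h \<in> borel_measurable N \<and> integrable M (\<lambda>\<omega>. (h (Zf \<omega>))\<^sup>2)}"

definition L2_continuous ::
  "'o measure \<Rightarrow> ('o \<Rightarrow> 'z) \<Rightarrow> 'z measure \<Rightarrow> (('z \<Rightarrow> real) \<Rightarrow> real) \<Rightarrow> bool" where
  "L2_continuous M Zf N F \<longleftrightarrow>
     (\<forall>h\<in>L2Z M Zf N. \<forall>e>0. \<exists>d>0. \<forall>g\<in>L2Z M Zf N.
        sqrt (\<integral>\<omega>. (g (Zf \<omega>) - h (Zf \<omega>))\<^sup>2 \<partial>M) < d \<longrightarrow> \<bar>F g - F h\<bar> < e)"

text \<open>Membership c \<in> G_n(phi, s, j, varphi) with associated parameter theta
  (theta given as a function on indices 0..<p, phi_j indexed 0..<p).\<close>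
definition in_Gn ::
  "'o measure \<Rightarrow> ('o \<Rightarrow> 'z) \<Rightarrow> 'z measure \<Rightarrow> real \<Rightarrow> nat \<Rightarrow>
   (nat \<Rightarrow> 'z \<Rightarrow> real) \<Rightarrow> nat \<Rightarrow> nat \<Rightarrow> nat \<Rightarrow> (real \<Rightarrow> real) \<Rightarrow> ('z \<Rightarrow> real) \<Rightarrow> (nat \<Rightarrow> real) \<Rightarrow> bool" where
  "in_Gn M Zf N K n \<phi> p s j \<psi> c \<theta> \<longleftrightarrow>
     card {i. i < p \<and> \<theta> i \<noteq> 0} \<le> s \<and>
     (\<lambda>z. c z - \<psi> (\<Sum>i<p. \<theta> i * \<phi> i z)) \<in> L2Z M Zf N \<and>
     (\<integral>\<omega>. (c (Zf \<omega>) - \<psi> (\<Sum>i<p. \<theta> i * \<phi> i (Zf \<omega>)))\<^sup>2 \<partial>M)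
        \<le> K * (real s * ln (real p) / real n) ^ j"

end

theory Submission
  imports Defs
begin

text \<open>Both terms are products of two L2(P) functions, one of them the approximation error r.
  By Cauchy--Schwarz, E|S h r| <= sqrt K * ||r||, and by domination and the Riesz representer,
  E|m(O,r)| <= E[md(O,|r|)] = E[R |r|] <= sqrt K * ||r||.  Membership of a in G_n with j = 2 gives
  ||r|| <= sqrt K * s log p / n, so sqrt n times the expectation is O(s log p / sqrt n) = o(1).\<close>

lemma integrable_mult_of_square_integrable:
  fixes f g :: "'a \<Rightarrow> real"
  assumes [measurable]: "f \<in> borel_measurable M" "g \<in> borel_measurable M"
    and "integrable M (\<lambda>x. (f x)\<^sup>2)" "integrable M (\<lambda>x. (g x)\<^sup>2)"
  shows "integrable M (\<lambda>x. f x * g x)"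
proof (rule Bochner_Integration.integrable_bound)
  show "integrable M (\<lambda>x. (f x)\<^sup>2 + (g x)\<^sup>2)" using assms(3,4) by simp
  have "\<bar>f x * g x\<bar> \<le> (f x)\<^sup>2 + (g x)\<^sup>2" for x
  proof -
    have "2 * \<bar>f x\<bar> * \<bar>g x\<bar> \<le> (f x)\<^sup>2 + (g x)\<^sup>2"
      using sum_squares_bound[of "\<bar>f x\<bar>" "\<bar>g x\<bar>"] by simp
    then show ?thesis
      unfolding abs_mult using mult_nonneg_nonneg[OF abs_ge_zero abs_ge_zero, of "f x" "g x"]
      by linarith
  qed
  then show "AE x in M. norm (f x * g x) \<le> norm ((f x)\<^sup>2 + (g x)\<^sup>2)" by auto
qed simp

lemma Cauchy_Schwarz_integral:
  fixes f g :: "'a \<Rightarrow> real"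
  assumes [measurable]: "f \<in> borel_measurable M" "g \<in> borel_measurable M"
    and fi: "integrable M (\<lambda>x. (f x)\<^sup>2)" and gi: "integrable M (\<lambda>x. (g x)\<^sup>2)"
  shows "(\<integral>x. \<bar>f x * g x\<bar> \<partial>M)\<^sup>2 \<le> (\<integral>x. (f x)\<^sup>2 \<partial>M) * (\<integral>x. (g x)\<^sup>2 \<partial>M)"
proof -
  have "integrable M (\<lambda>x. f x * g x)"
    using fi gi by (simp add: integrable_mult_of_square_integrable)
  then have "(\<integral>\<^sup>+x. ennreal \<bar>f x\<bar> * ennreal \<bar>g x\<bar> \<partial>M) = ennreal (\<integral>x. \<bar>f x * g x\<bar> \<partial>M)"
    by (simp add: ennreal_mult[symmetric] abs_mult[symmetric] nn_integral_eq_integral)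
  then have "ennreal ((\<integral>x. \<bar>f x * g x\<bar> \<partial>M)\<^sup>2) = (\<integral>\<^sup>+x. ennreal \<bar>f x\<bar> * ennreal \<bar>g x\<bar> \<partial>M)\<^sup>2"
    by (simp add: ennreal_power)
  also have "\<dots> \<le> (\<integral>\<^sup>+x. (ennreal \<bar>f x\<bar>)\<^sup>2 \<partial>M) * (\<integral>\<^sup>+x. (ennreal \<bar>g x\<bar>)\<^sup>2 \<partial>M)"
    by (rule Cauchy_Schwarz_nn_integral) auto
  also have "\<dots> = ennreal ((\<integral>x. (f x)\<^sup>2 \<partial>M) * (\<integral>x. (g x)\<^sup>2 \<partial>M))"
    using fi gi by (simp add: ennreal_power nn_integral_eq_integral ennreal_mult)
  finally show ?thesis by (simp add: ennreal_le_iff)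
qed

lemma integral_abs_mult_le:
  fixes f g :: "'a \<Rightarrow> real"
  assumes "f \<in> borel_measurable M" "g \<in> borel_measurable M"
    and "integrable M (\<lambda>x. (f x)\<^sup>2)" "integrable M (\<lambda>x. (g x)\<^sup>2)"
    and "(\<integral>x. (f x)\<^sup>2 \<partial>M) \<le> A\<^sup>2" "(\<integral>x. (g x)\<^sup>2 \<partial>M) \<le> B\<^sup>2" "0 \<le> A" "0 \<le> B"
  shows "(\<integral>x. \<bar>f x * g x\<bar> \<partial>M) \<le> A * B"
proof (rule power2_le_imp_le)
  have "(\<integral>x. \<bar>f x * g x\<bar> \<partial>M)\<^sup>2 \<le> (\<integral>x. (f x)\<^sup>2 \<partial>M) * (\<integral>x. (g x)\<^sup>2 \<partial>M)"
    using assms(1-4) by (rule Cauchy_Schwarz_integral)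
  also have "\<dots> \<le> A\<^sup>2 * B\<^sup>2"
    using assms(5,6) by (intro mult_mono) auto
  finally show "(\<integral>x. \<bar>f x * g x\<bar> \<partial>M)\<^sup>2 \<le> (A * B)\<^sup>2" by (simp add: power_mult_distrib)
qed (use assms(7,8) in simp)

lemma integral_abs_add_le:
  fixes f g :: "'a \<Rightarrow> real"
  assumes "integrable M f" "integrable M g"
  shows "(\<integral>x. \<bar>f x + g x\<bar> \<partial>M) \<le> (\<integral>x. \<bar>f x\<bar> \<partial>M) + (\<integral>x. \<bar>g x\<bar> \<partial>M)"
proof -
  have "(\<integral>x. \<bar>f x + g x\<bar> \<partial>M) \<le> (\<integral>x. \<bar>f x\<bar> + \<bar>g x\<bar> \<partial>M)"
    using assms by (intro integral_mono) auto
  also have "\<dots> = (\<integral>x. \<bar>f x\<bar> \<partial>M) + (\<integral>x. \<bar>g x\<bar> \<partial>M)"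
    using assms by (intro Bochner_Integration.integral_add) auto
  finally show ?thesis .
qed

lemma L2Z_abs: "g \<in> L2Z M Zf N \<Longrightarrow> (\<lambda>z. \<bar>g z\<bar>) \<in> L2Z M Zf N"
  unfolding L2Z_def by auto

lemma L2Z_comp_measurable:
  "Zf \<in> measurable M N \<Longrightarrow> g \<in> L2Z M Zf N \<Longrightarrow> (\<lambda>\<omega>. g (Zf \<omega>)) \<in> borel_measurable M"
  unfolding L2Z_def by (auto intro: measurable_compose)

lemma L2Z_square_integrable: "g \<in> L2Z M Zf N \<Longrightarrow> integrable M (\<lambda>\<omega>. (g (Zf \<omega>))\<^sup>2)"
  unfolding L2Z_def by auto

lemma integral_abs_le_of_Riesz_domination:
  fixes m md :: "'o \<Rightarrow> ('z \<Rightarrow> real) \<Rightarrow> real"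
  assumes Zf: "Zf \<in> measurable M N" and r: "r \<in> L2Z M Zf N" and R: "R \<in> L2Z M Zf N"
    and m_int: "integrable M (\<lambda>\<omega>. m \<omega> r)"
    and md_int: "integrable M (\<lambda>\<omega>. md \<omega> (\<lambda>z. \<bar>r z\<bar>))"
    and riesz: "(\<integral>\<omega>. md \<omega> (\<lambda>z. \<bar>r z\<bar>) \<partial>M) = (\<integral>\<omega>. R (Zf \<omega>) * \<bar>r (Zf \<omega>)\<bar> \<partial>M)"
    and dom: "\<And>\<omega>. \<bar>m \<omega> r\<bar> \<le> md \<omega> (\<lambda>z. \<bar>r z\<bar>)"
    and R_bound: "(\<integral>\<omega>. (R (Zf \<omega>))\<^sup>2 \<partial>M) \<le> A\<^sup>2" and r_bound: "(\<integral>\<omega>. (r (Zf \<omega>))\<^sup>2 \<partial>M) \<le> B\<^sup>2"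
    and "0 \<le> A" "0 \<le> B"
  shows "(\<integral>\<omega>. \<bar>m \<omega> r\<bar> \<partial>M) \<le> A * B"
proof -
  have abs_r: "(\<lambda>z. \<bar>r z\<bar>) \<in> L2Z M Zf N" using r by (rule L2Z_abs)
  have "integrable M (\<lambda>\<omega>. R (Zf \<omega>) * \<bar>r (Zf \<omega>)\<bar>)"
    using L2Z_comp_measurable[OF Zf] L2Z_square_integrable R r abs_r
    by (intro integrable_mult_of_square_integrable) auto
  then have "(\<integral>\<omega>. R (Zf \<omega>) * \<bar>r (Zf \<omega>)\<bar> \<partial>M) \<le> (\<integral>\<omega>. \<bar>R (Zf \<omega>) * \<bar>r (Zf \<omega>)\<bar>\<bar> \<partial>M)"
    by (intro integral_mono) auto
  also have "\<dots> \<le> A * B"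
    using L2Z_comp_measurable[OF Zf] L2Z_square_integrable R r abs_r R_bound r_bound assms(10,11)
    by (intro integral_abs_mult_le) auto
  finally have "(\<integral>\<omega>. md \<omega> (\<lambda>z. \<bar>r z\<bar>) \<partial>M) \<le> A * B" using riesz by simp
  moreover have "(\<integral>\<omega>. \<bar>m \<omega> r\<bar> \<partial>M) \<le> (\<integral>\<omega>. md \<omega> (\<lambda>z. \<bar>r z\<bar>) \<partial>M)"
    using m_int md_int dom by (intro integral_mono) auto
  ultimately show ?thesis by linarith
qed

lemma integral_abs_mult_add_dominated_le:
  fixes m md :: "'o \<Rightarrow> ('z \<Rightarrow> real) \<Rightarrow> real"
  assumes Zf: "Zf \<in> measurable M N" and r: "r \<in> L2Z M Zf N" and R: "R \<in> L2Z M Zf N"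
    and f: "f \<in> borel_measurable M" "integrable M (\<lambda>\<omega>. (f \<omega>)\<^sup>2)"
    and m_int: "integrable M (\<lambda>\<omega>. m \<omega> r)"
    and md_int: "integrable M (\<lambda>\<omega>. md \<omega> (\<lambda>z. \<bar>r z\<bar>))"
    and riesz: "(\<integral>\<omega>. md \<omega> (\<lambda>z. \<bar>r z\<bar>) \<partial>M) = (\<integral>\<omega>. R (Zf \<omega>) * \<bar>r (Zf \<omega>)\<bar> \<partial>M)"
    and dom: "\<And>\<omega>. \<bar>m \<omega> r\<bar> \<le> md \<omega> (\<lambda>z. \<bar>r z\<bar>)"
    and f_bound: "(\<integral>\<omega>. (f \<omega>)\<^sup>2 \<partial>M) \<le> A\<^sup>2" and R_bound: "(\<integral>\<omega>. (R (Zf \<omega>))\<^sup>2 \<partial>M) \<le> A\<^sup>2"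
    and r_bound: "(\<integral>\<omega>. (r (Zf \<omega>))\<^sup>2 \<partial>M) \<le> B\<^sup>2"
    and A: "0 \<le> A" and B: "0 \<le> B"
  shows "(\<integral>\<omega>. \<bar>f \<omega> * r (Zf \<omega>) + m \<omega> r\<bar> \<partial>M) \<le> 2 * (A * B)"
proof -
  note rZ = L2Z_comp_measurable[OF Zf r] L2Z_square_integrable[OF r]
  have "(\<integral>\<omega>. \<bar>f \<omega> * r (Zf \<omega>) + m \<omega> r\<bar> \<partial>M)
      \<le> (\<integral>\<omega>. \<bar>f \<omega> * r (Zf \<omega>)\<bar> \<partial>M) + (\<integral>\<omega>. \<bar>m \<omega> r\<bar> \<partial>M)"
    using integrable_mult_of_square_integrable[OF f(1) rZ(1) f(2) rZ(2)] m_int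
    by (rule integral_abs_add_le)
  also have "\<dots> \<le> A * B + A * B"
  proof (rule add_mono)
    show "(\<integral>\<omega>. \<bar>f \<omega> * r (Zf \<omega>)\<bar> \<partial>M) \<le> A * B"
      using f rZ f_bound r_bound A B by (intro integral_abs_mult_le) auto
    show "(\<integral>\<omega>. \<bar>m \<omega> r\<bar> \<partial>M) \<le> A * B"
      using Zf r R m_int md_int riesz dom R_bound r_bound A B
      by (rule integral_abs_le_of_Riesz_domination)
  qed
  finally show ?thesis by simp
qed

lemma sqrt_mult_divide_self: "sqrt (real n) * (c / real n) = c / sqrt (real n)"
  by (cases "n = 0") (simp_all add: field_simps real_sqrt_mult[symmetric])

theorem lemma9:
  fixes M :: "nat \<Rightarrow> 'o measure" and N :: "'z measure" and Zf :: "'o \<Rightarrow> 'z"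
    and K :: real
    and S :: "nat \<Rightarrow> 'o \<Rightarrow> real"
    and m :: "nat \<Rightarrow> 'o \<Rightarrow> ('z \<Rightarrow> real) \<Rightarrow> real"
    and md :: "nat \<Rightarrow> 'o \<Rightarrow> ('z \<Rightarrow> real) \<Rightarrow> real"
    and R :: "nat \<Rightarrow> 'z \<Rightarrow> real"
    and \<phi> :: "nat \<Rightarrow> nat \<Rightarrow> 'z \<Rightarrow> real" and p :: "nat \<Rightarrow> nat" and s :: "nat \<Rightarrow> nat"
    and \<psi> :: "nat \<Rightarrow> real \<Rightarrow> real" and a :: "nat \<Rightarrow> 'z \<Rightarrow> real"
    and \<theta> :: "nat \<Rightarrow> nat \<Rightarrow> real" and h :: "nat \<Rightarrow> 'z \<Rightarrow> real"
  assumes K_pos: "K > 0"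
    and prob: "\<And>n. prob_space (M n)"
    and Zmeas: "\<And>n. Zf \<in> measurable (M n) N"
    and S_meas: "\<And>n. S n \<in> borel_measurable (M n)"
    \<comment> \<open>m_a: linear a.s. on L2(P_Z), E[m_a(O,h)] defined and continuous\<close>
    and m_int: "\<And>n g. g \<in> L2Z (M n) Zf N \<Longrightarrow> integrable (M n) (\<lambda>\<omega>. m n \<omega> g)"
    and m_lin: "\<And>n g1 g2 c1 c2. g1 \<in> L2Z (M n) Zf N \<Longrightarrow> g2 \<in> L2Z (M n) Zf N \<Longrightarrow>
        AE \<omega> in M n. m n \<omega> (\<lambda>z. c1 * g1 z + c2 * g2 z) = c1 * m n \<omega> g1 + c2 * m n \<omega> g2"
    and m_cont: "\<And>n. L2_continuous (M n) Zf N (\<lambda>g. \<integral>\<omega>. m n \<omega> g \<partial>M n)"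
    \<comment> \<open>m_a dagger: linear, continuous expectation with Riesz representer R\<close>
    and md_int: "\<And>n g. g \<in> L2Z (M n) Zf N \<Longrightarrow> integrable (M n) (\<lambda>\<omega>. md n \<omega> g)"
    and md_lin: "\<And>n \<omega> g1 g2 c1 c2. g1 \<in> L2Z (M n) Zf N \<Longrightarrow> g2 \<in> L2Z (M n) Zf N \<Longrightarrow>
        md n \<omega> (\<lambda>z. c1 * g1 z + c2 * g2 z) = c1 * md n \<omega> g1 + c2 * md n \<omega> g2"
    and md_cont: "\<And>n. L2_continuous (M n) Zf N (\<lambda>g. \<integral>\<omega>. md n \<omega> g \<partial>M n)"
    and R_L2: "\<And>n. R n \<in> L2Z (M n) Zf N"
    and R_riesz: "\<And>n g. g \<in> L2Z (M n) Zf N \<Longrightarrow>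
        (\<integral>\<omega>. md n \<omega> g \<partial>M n) = (\<integral>\<omega>. R n (Zf \<omega>) * g (Zf \<omega>) \<partial>M n)"
    and dom: "\<And>n \<omega> g. g \<in> L2Z (M n) Zf N \<Longrightarrow> \<bar>m n \<omega> g\<bar> \<le> md n \<omega> (\<lambda>z. \<bar>g z\<bar>)"
    and R_bound: "\<And>n. (\<integral>\<omega>. (R n (Zf \<omega>))\<^sup>2 \<partial>M n) \<le> K"
    \<comment> \<open>a \<in> G_n(phi, s_a, 2, varphi) with associated parameter theta\<close>
    and a_G: "\<And>n. in_Gn (M n) Zf N K n (\<phi> n) (p n) (s n) 2 (\<psi> n) (a n) (\<theta> n)"
    and rate: "(\<lambda>n. real (s n) * ln (real (p n)) / sqrt (real n)) \<longlonglongrightarrow> 0"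
    \<comment> \<open>h with E[(S h)^2] \<le> K\<close>
    and h_meas: "\<And>n. h n \<in> borel_measurable N"
    and Sh_int: "\<And>n. integrable (M n) (\<lambda>\<omega>. (S n \<omega> * h n (Zf \<omega>))\<^sup>2)"
    and Sh_bound: "\<And>n. (\<integral>\<omega>. (S n \<omega> * h n (Zf \<omega>))\<^sup>2 \<partial>M n) \<le> K"
  shows "(\<lambda>n. let r = (\<lambda>z. a n z - \<psi> n (\<Sum>i<p n. \<theta> n i * \<phi> n i z)) in
            sqrt (real n) * (\<integral>\<omega>. \<bar>S n \<omega> * h n (Zf \<omega>) * r (Zf \<omega>) + m n \<omega> r\<bar> \<partial>M n))
         \<longlonglongrightarrow> 0"
proof -
  have bound: "sqrt (real n) * (\<integral>\<omega>. \<bar>S n \<omega> * h n (Zf \<omega>) * r (Zf \<omega>) + m n \<omega> r\<bar> \<partial>M n)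
      \<le> 2 * K * \<bar>real (s n) * ln (real (p n)) / sqrt (real n)\<bar>"
    if r_def: "r = (\<lambda>z. a n z - \<psi> n (\<Sum>i<p n. \<theta> n i * \<phi> n i z))" for n r
  proof -
    define e where "e = real (s n) * ln (real (p n)) / real n"
    have r: "r \<in> L2Z (M n) Zf N" and "(\<integral>\<omega>. (r (Zf \<omega>))\<^sup>2 \<partial>M n) \<le> K * e\<^sup>2"
      using a_G[of n] unfolding in_Gn_def r_def e_def by auto
    then have r_bound: "(\<integral>\<omega>. (r (Zf \<omega>))\<^sup>2 \<partial>M n) \<le> (sqrt K * \<bar>e\<bar>)\<^sup>2"
      using K_pos by (simp add: power_mult_distrib)
    have Sh: "(\<lambda>\<omega>. S n \<omega> * h n (Zf \<omega>)) \<in> borel_measurable (M n)"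
      using S_meas[of n] measurable_compose[OF Zmeas[of n] h_meas[of n]] by measurable
    have "(\<integral>\<omega>. \<bar>S n \<omega> * h n (Zf \<omega>) * r (Zf \<omega>) + m n \<omega> r\<bar> \<partial>M n)
        \<le> 2 * (sqrt K * (sqrt K * \<bar>e\<bar>))"
      by (rule integral_abs_mult_add_dominated_le[where m="m n" and md="md n" and R="R n",
            OF Zmeas[of n] r R_L2[of n] Sh Sh_int[of n] m_int[OF r] md_int[OF L2Z_abs[OF r]]
            R_riesz[OF L2Z_abs[OF r]] dom[OF r]])
        (use Sh_bound[of n] R_bound[of n] r_bound K_pos in auto)
    then have "sqrt (real n) * (\<integral>\<omega>. \<bar>S n \<omega> * h n (Zf \<omega>) * r (Zf \<omega>) + m n \<omega> r\<bar> \<partial>M n)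
        \<le> sqrt (real n) * (2 * (sqrt K * (sqrt K * \<bar>e\<bar>)))"
      by (rule mult_left_mono) simp
    also have "\<dots> = 2 * K * (sqrt (real n) * \<bar>e\<bar>)"
      using K_pos by (simp add: ac_simps)
    also have "sqrt (real n) * \<bar>e\<bar> = \<bar>real (s n) * ln (real (p n)) / sqrt (real n)\<bar>"
      unfolding e_def by (simp add: abs_mult sqrt_mult_divide_self[symmetric])
    finally show ?thesis .
  qed
  have "(\<lambda>n. 2 * K * \<bar>real (s n) * ln (real (p n)) / sqrt (real n)\<bar>) \<longlonglongrightarrow> 0"
    using tendsto_mult_right_zero[OF tendsto_rabs_zero[OF rate], of "2 * K"] by simp
  then show ?thesis
    unfolding Let_def
    by (rule Lim_null_comparison[rotated]) (use bound[OF refl] in \<open>auto intro!: always_eventually\<close>)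
qed

end
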